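(* For every integer $n\ge 0$, \[ \sum_{k=0}^{n}\Big(-\frac{1}{4}\Big)^k\binom{n}{k}\binom{1+2k}{k}H_{1+2k} =\frac{1}{2^{1+2n}(1+2n)}\binom{1+2n}{n}\Big\{\frac{8+8n}{1+2n}+3H_n-4H_{1+2n}\Big\}-\frac{1}{1+n}. \]
   Context: For an integer $m\ge 0$, $H_m$ denotes the $m$-th harmonic number: $H_0=0$ and $H_m=\sum_{j=1}^m \frac1j$ for $m\ge1$. $\binom{n}{k}$ is the usual binomial coefficient. *)

theory Defs
  imports "HOL-Analysis.Analysis"
begin

end

theory Submission
  imports Defs
begin

(* Creative telescoping. With w m j = binom(m,j) (-1/4)^j binom(2j,j) (4j+1), the summand F n k
   of the theorem has a certificate G (found by Zeilberger's algorithm) such that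
     2(n+2) F (n+1) k - (2n+1) F n k = G n (k+1) - G n k + w (n+1) (k+1) / (n+1).
   Summing over k gives a first-order recurrence in n for the sum, whose inhomogeneous part
   sum_j w (n+1) j is evaluated the same way, with a certificate of its own and no inhomogeneity.
   The right-hand side satisfies the same recurrence and initial value. *)

lemma sum_recurrence_by_telescoping:
  fixes F :: "nat \<Rightarrow> nat \<Rightarrow> 'a::comm_ring" and G r :: "nat \<Rightarrow> 'a"
  assumes step: "\<And>k. a * F (Suc m) k - b * F m k = G (Suc k) - G k + r k"
    and "G 0 = 0" and "G (Suc (Suc m)) = 0" and "F m (Suc m) = 0"
  shows "a * (\<Sum>k\<le>Suc m. F (Suc m) k) - b * (\<Sum>k\<le>m. F m k) = (\<Sum>k\<le>Suc m. r k)"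
proof -
  have "(\<Sum>k\<le>m. F m k) = (\<Sum>k\<le>Suc m. F m k)"
    using \<open>F m (Suc m) = 0\<close> by (simp only: sum.atMost_Suc add_0_right)
  then have "a * (\<Sum>k\<le>Suc m. F (Suc m) k) - b * (\<Sum>k\<le>m. F m k)
      = (\<Sum>k\<le>Suc m. a * F (Suc m) k - b * F m k)"
    by (simp only: sum_subtractf sum_distrib_left)
  also have "\<dots> = (\<Sum>k\<le>Suc m. G (Suc k) - G k) + (\<Sum>k\<le>Suc m. r k)"
    by (simp only: step sum.distrib)
  also have "(\<Sum>k\<le>Suc m. G (Suc k) - G k) = G (Suc (Suc m)) - G 0"
    using sum_lessThan_telescope[of G "Suc (Suc m)"] by (simp only: lessThan_Suc_atMost)
  finally show ?thesis
    using assms(2,3) by (simp only: diff_zero add_0_left)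
qed

lemma real_choose_eq_Suc_choose:
  "real (n choose k) = real (Suc n choose k) * (real n + 1 - real k) / (real n + 1)"
proof (cases "k \<le> Suc n")
  case True
  have "real (Suc n - k) * real (Suc n choose k) = real (Suc n) * real (n choose k)"
    using binomial_absorb_comp[of "Suc n" k] by (metis diff_Suc_1 of_nat_mult)
  with True show ?thesis
    by (simp add: of_nat_diff field_simps)
next
  case False
  then show ?thesis
    by (simp add: binomial_eq_0)
qed

lemma real_Suc_choose_Suc_eq:
  "real (Suc n choose Suc k) = real (Suc n choose k) * (real n + 1 - real k) / (real k + 1)"
proof -
  have "real (Suc k) * real (Suc n choose Suc k) = real (Suc n) * real (n choose k)"
    using binomial_absorption[of k "Suc n"] by (metis diff_Suc_1 of_nat_mult)
  also have "\<dots> = real (Suc n choose k) * (real n + 1 - real k)"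
    using real_choose_eq_Suc_choose[of n k] by (simp add: field_simps)
  finally show ?thesis
    by (simp add: field_simps)
qed

lemma real_odd_choose_eq_central:
  "real ((1 + 2*k) choose k) = real ((2*k) choose k) * (2 * real k + 1) / (real k + 1)"
proof -
  have "Suc (2*k) * ((2*k) choose k) = (Suc (2*k) choose Suc k) * Suc k"
    by (rule Suc_times_binomial_eq)
  moreover have "Suc (2*k) choose Suc k = Suc (2*k) choose k"
    using binomial_symmetric[of k "Suc (2*k)"] by simp
  ultimately have "real (Suc (2*k)) * real ((2*k) choose k) = real (Suc (2*k) choose k) * real (Suc k)"
    by (metis of_nat_mult)
  then show ?thesis
    by (simp add: field_simps)
qed

lemma real_central_choose_Suc:
  "real ((2 * Suc k) choose Suc k) = 2 * real ((1 + 2*k) choose k)"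
proof -
  have "Suc (Suc (2*k)) choose Suc k = (Suc (2*k) choose k) + (Suc (2*k) choose Suc k)"
    by (rule binomial_Suc_Suc)
  moreover have "Suc (2*k) choose Suc k = Suc (2*k) choose k"
    using binomial_symmetric[of k "Suc (2*k)"] by simp
  moreover have "2 * Suc k = Suc (Suc (2*k))" "1 + 2*k = Suc (2*k)"
    by simp_all
  ultimately show ?thesis
    by (metis mult_2 of_nat_add)
qed

definition scaled_central :: "real \<Rightarrow> nat \<Rightarrow> real" where
  "scaled_central x k = x ^ k * real ((2*k) choose k)"

lemma scaled_central_Suc:
  "scaled_central x (Suc k) = 4 * x * scaled_central x k * (2 * real k + 1) / (2 * real k + 2)"
  unfolding scaled_central_def real_central_choose_Suc real_odd_choose_eq_central
  by (simp add: field_simps)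

lemma harm_odd_Suc:
  "harm (1 + 2 * Suc k) = harm (1 + 2*k) + 1 / (2 * real k + 2) + 1 / (2 * real k + 3)"
proof -
  have "1 + 2 * Suc k = Suc (Suc (1 + 2*k))"
    by simp
  then show ?thesis
    by (simp add: harm_Suc divide_inverse add_ac)
qed

lemma real_Suc_eq: "real (Suc k) = real k + 1"
  by simp

definition central_term :: "nat \<Rightarrow> nat \<Rightarrow> real" where
  "central_term m j = real (m choose j) * scaled_central (-1/4) j * (4 * real j + 1)"

definition central_cert :: "nat \<Rightarrow> nat \<Rightarrow> real" where
  "central_cert m k = -2 * (real k)^2 * (12 * real k - 7 + (8 * real k - 6) * real m) / (real m + 1)
     * real (Suc m choose k) * scaled_central (-1/4) k"

lemma central_term_recurrence:
  "2 * (real m + 1) * (2 * real m + 1) * central_term (Suc m) k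
     - (2 * real m + 3) * (2 * real m - 1) * central_term m k
   = central_cert m (Suc k) - central_cert m k"
proof -
  have "real m + 1 \<noteq> 0" "real k + 1 \<noteq> 0" "2 * real k + 2 \<noteq> 0"
    by linarith+
  then show ?thesis
    unfolding central_term_def central_cert_def
    apply (simp only: real_choose_eq_Suc_choose[of m k] real_Suc_choose_Suc_eq[of m k]
        scaled_central_Suc[of _ k] real_Suc_eq[of k])
    apply (simp add: divide_simps)
    by algebra
qed

(* The summand of the theorem, with binom(2k+1,k) written via binom(2k,k). *)
definition harmonic_term :: "nat \<Rightarrow> nat \<Rightarrow> real" where
  "harmonic_term n k = real (n choose k) * scaled_central (-1/4) k * (2 * real k + 1) / (real k + 1)
     * harm (1 + 2*k)"

definition harmonic_cert :: "nat \<Rightarrow> nat \<Rightarrow> real" where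
  "harmonic_cert n k = -2 * real k * (2 * real k + 1) / (real n + 1)
     * real (Suc n choose k) * scaled_central (-1/4) k * harm (1 + 2*k)"

lemma harmonic_term_recurrence:
  "2 * (real n + 2) * harmonic_term (Suc n) k - (2 * real n + 1) * harmonic_term n k
   = harmonic_cert n (Suc k) - harmonic_cert n k + central_term (Suc n) (Suc k) / (real n + 1)"
proof -
  have "real n + 1 \<noteq> 0" "real k + 1 \<noteq> 0" "2 * real k + 2 \<noteq> 0" "real k + 2 \<noteq> 0"
    "2 * real k + 3 \<noteq> 0" "real k + 1 + 1 \<noteq> 0"
    by linarith+
  then show ?thesis
    unfolding harmonic_term_def harmonic_cert_def central_term_def
    apply (simp only: real_choose_eq_Suc_choose[of n k] real_Suc_choose_Suc_eq[of n k]
        scaled_central_Suc[of _ k] harm_odd_Suc[of k] real_Suc_eq[of k])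
    apply (simp add: divide_simps)
    by algebra
qed

lemma sum_central_term:
  "(\<Sum>j\<le>m. central_term m j) = - scaled_central (1/4) m * (2 * real m + 1) / (2 * real m - 1)"
proof (induction m)
  case 0
  show ?case
    by (simp add: central_term_def scaled_central_def)
next
  case (Suc m)
  have "2 * (real m + 1) * (2 * real m + 1) * (\<Sum>j\<le>Suc m. central_term (Suc m) j)
      - (2 * real m + 3) * (2 * real m - 1) * (\<Sum>j\<le>m. central_term m j) = (\<Sum>j\<le>Suc m. 0)"
    by (rule sum_recurrence_by_telescoping[where G = "central_cert m"],
        simp only: central_term_recurrence add_0_right)
      (simp_all add: central_cert_def central_term_def binomial_eq_0 del: binomial_Suc_Suc)
  then have sum_Suc: "(\<Sum>j\<le>Suc m. central_term (Suc m) j)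
      = (2 * real m + 3) * (2 * real m - 1) * (\<Sum>j\<le>m. central_term m j)
        / (2 * (real m + 1) * (2 * real m + 1))"
    by (intro eq_divide_imp) (simp, simp add: algebra_simps del: sum.atMost_Suc)
  have "2 * real m - 1 \<noteq> 0"
    by (cases m) simp_all
  moreover have "real m + 1 \<noteq> 0" "2 * real m + 1 \<noteq> 0" "2 * real m + 2 \<noteq> 0"
    by linarith+
  ultimately show ?case
    unfolding sum_Suc Suc.IH scaled_central_Suc real_Suc_eq
    by (simp add: divide_simps) algebra
qed

lemma sum_harmonic_term_recurrence:
  "2 * (real n + 2) * (\<Sum>k\<le>Suc n. harmonic_term (Suc n) k)
     - (2 * real n + 1) * (\<Sum>k\<le>n. harmonic_term n k)
   = ((\<Sum>j\<le>Suc n. central_term (Suc n) j) - 1) / (real n + 1)"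
proof -
  have "2 * (real n + 2) * (\<Sum>k\<le>Suc n. harmonic_term (Suc n) k)
      - (2 * real n + 1) * (\<Sum>k\<le>n. harmonic_term n k)
      = (\<Sum>k\<le>Suc n. central_term (Suc n) (Suc k) / (real n + 1))"
    by (rule sum_recurrence_by_telescoping[where G = "harmonic_cert n"],
        simp only: harmonic_term_recurrence)
      (simp_all add: harmonic_cert_def harmonic_term_def binomial_eq_0 del: binomial_Suc_Suc)
  also have "\<dots> = ((\<Sum>j\<le>Suc (Suc n). central_term (Suc n) j) - central_term (Suc n) 0)
      / (real n + 1)"
    by (simp add: sum.atMost_Suc_shift sum_divide_distrib add_divide_distrib
        del: sum.atMost_Suc)
  also have "(\<Sum>j\<le>Suc (Suc n). central_term (Suc n) j) = (\<Sum>j\<le>Suc n. central_term (Suc n) j)"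
    by (simp add: central_term_def binomial_eq_0 del: binomial_Suc_Suc)
  finally show ?thesis
    by (simp add: central_term_def scaled_central_def)
qed

lemma sum_harmonic_term:
  "(\<Sum>k\<le>n. harmonic_term n k) = scaled_central (1/4) n / (2 * (real n + 1))
     * (8 * (real n + 1) / (2 * real n + 1) + 3 * harm n - 4 * harm (1 + 2*n)) - 1 / (real n + 1)"
proof (induction n)
  case 0
  show ?case
    by (simp add: harmonic_term_def scaled_central_def harm_def)
next
  case (Suc n)
  have sum_Suc: "(\<Sum>k\<le>Suc n. harmonic_term (Suc n) k)
      = ((2 * real n + 1) * (\<Sum>k\<le>n. harmonic_term n k)
         + ((\<Sum>j\<le>Suc n. central_term (Suc n) j) - 1) / (real n + 1)) / (2 * (real n + 2))"
    using sum_harmonic_term_recurrence[of n]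
    by (intro eq_divide_imp) (simp_all add: algebra_simps del: sum.atMost_Suc)
  have "2 * real n - 1 \<noteq> 0"
    by (cases n) simp_all
  moreover have "real n + 1 \<noteq> 0" "real n + 2 \<noteq> 0" "2 * real n + 1 \<noteq> 0"
    "2 * real n + 2 \<noteq> 0" "2 * real n + 3 \<noteq> 0"
    by linarith+
  ultimately show ?case
    unfolding sum_Suc Suc.IH sum_central_term scaled_central_Suc harm_odd_Suc harm_Suc real_Suc_eq
    by (simp add: divide_simps) algebra
qed

theorem theorem10:
  fixes n :: nat
  shows "(\<Sum>k=0..n. (-1/4::real)^k * real (n choose k) * real ((1+2*k) choose k) * harm (1+2*k))
    = 1 / (2^(1+2*n) * real (1+2*n)) * real ((1+2*n) choose n)
        * ((8 + 8 * real n) / real (1+2*n) + 3 * harm n - 4 * harm (1+2*n))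
      - 1 / real (1+n)"
proof -
  have "(\<Sum>k=0..n. (-1/4::real)^k * real (n choose k) * real ((1+2*k) choose k) * harm (1+2*k))
      = (\<Sum>k\<le>n. harmonic_term n k)"
    unfolding atLeast0AtMost harmonic_term_def scaled_central_def real_odd_choose_eq_central
    by (simp add: mult_ac)
  also have "\<dots> = scaled_central (1/4) n / (2 * (real n + 1))
      * (8 * (real n + 1) / (2 * real n + 1) + 3 * harm n - 4 * harm (1 + 2*n)) - 1 / (real n + 1)"
    by (rule sum_harmonic_term)
  also have "\<dots> = 1 / (2^(1+2*n) * real (1+2*n)) * real ((1+2*n) choose n)
        * ((8 + 8 * real n) / real (1+2*n) + 3 * harm n - 4 * harm (1+2*n))
      - 1 / real (1+n)"
  proof -
    have pow: "(2::real) ^ (1 + 2*n) = 2 * 4 ^ n"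
      by (simp add: power_add power_mult)
    have central: "scaled_central (1/4) n = real ((2*n) choose n) / 4 ^ n"
      by (simp add: scaled_central_def power_one_over)
    have "(4::real) ^ n \<noteq> 0" "real n + 1 \<noteq> 0" "2 * real n + 1 \<noteq> 0"
      by simp_all
    then show ?thesis
      unfolding pow central real_odd_choose_eq_central
      by (simp add: divide_simps) algebra
  qed
  finally show ?thesis .
qed

end
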